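(* Let $v=s_{\mathbf i}s_{\mathbf j}^*\in\mathrm{Cu}_2\setminus\{\lozenge\}$ and let $f\in\mathcal A$ have zero sums at $v$, i.e. $\sum_{l=0}^\infty f(s_{\mathbf i\mathbf n_l}s_{\mathbf j\mathbf n_l}^* )=0$ for every $\mathbf n\in\mathbf L$. Then $h:=\sum_{t\in S_v}f(t)\delta_t$ belongs to $\mathcal J$.
   Context: Let $\mathrm{Cu}_2$ be the involutive monoid with identity $e$ and zero element $\lozenge$ (so $\lozenge t=\lozenge=t\lozenge$ for all $t$), generated by $s_1,s_2,s_1^*,s_2^*$ subject to $s_1^*s_1=e=s_2^*s_2$ and $s_1^*s_2=\lozenge=s_2^*s_1$, with involution $t\mapsto t^*$ satisfying $(t^* )^*=t$, $(tu)^*=u^*t^*$. Let $\mathbf I_0=\{\emptyset\}$, $\mathbf I_n=\{1,2\}^n$, $\mathbf I=\bigcup_{n\ge0}\mathbf I_n$ (finite words; concatenation written $\mathbf{ij}$), and $\mathbf L=\{1,2\}^{\mathbb N}$; for $\mathbf n=(n_1,n_2,\dots)\in\mathbf L$ put $\mathbf n_0=\emptyset$, $\mathbf n_l=(n_1,\dots,n_l)$. For $\mathbf i=(i_1,\dots,i_k)\in\mathbf I$ put $s_{\mathbf i}=s_{i_1}\cdots s_{i_k}$ ($s_\emptyset=e$) and $s_{\mathbf i}^*=(s_{\mathbf i})^*$. Every $t\in\mathrm{Cu}_2\setminus\{\lozenge\}$ can be written uniquely as $t=s_{\mathbf i}s_{\mathbf j}^*$ with $\mathbf i,\mathbf j\in\mathbf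 I$. Let $\mathcal A=\ell^1(\mathrm{Cu}_2\setminus\{\lozenge\})$ with product $\#$ determined by bilinearity and continuity from $\delta_s\#\delta_t=\delta_{st}$ if $st\neq\lozenge$ and $\delta_s\#\delta_t=0$ if $st=\lozenge$; this is a unital Banach $*$-algebra with unit $\delta_e$ and isometric involution $f^*(s)=\overline{f(s^* )}$. Let $f_0=\delta_e-\delta_{s_1s_1^*}-\delta_{s_2s_2^*}$ and let $\mathcal J$ be the closed two-sided ideal of $\mathcal A$ generated by $f_0$. For $v=s_{\mathbf i}s_{\mathbf j}^*$, $S_v=\{s_{\mathbf{ik}}s_{\mathbf{jk}}^*:\mathbf k\in\mathbf I\}$ is the set of symmetric expansions of $v$. *)

theory Defs
  imports "HOL-Analysis.Analysis"
begin

datatype gen = G1 | G2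

text \<open>A nonzero element of Cu_2 is written uniquely as s_i s_j^*; we represent it
  by the pair of words (i, j). The zero element is represented by None.\<close>
type_synonym cu = "gen list \<times> gen list"

definition cu_mult :: "cu \<Rightarrow> cu \<Rightarrow> cu option" where
  "cu_mult x y = (case x of (i, j) \<Rightarrow> case y of (k, l) \<Rightarrow>
     if (\<exists>k'. k = j @ k') then Some (i @ drop (length j) k, l)
     else if (\<exists>j'. j = k @ j') then Some (i, l @ drop (length k) j)
     else None)"

definition cu_star :: "cu \<Rightarrow> cu" where
  "cu_star x = (snd x, fst x)"

definition cu_e :: cu where "cu_e = ([], [])"

definition in_A :: "(cu \<Rightarrow> complex) \<Rightarrow> bool" where
  "in_A f \<longleftrightarrow> (\<lambda>t. norm (f t)) summable_on UNIV"

definition l1norm :: "(cu \<Rightarrow> complex) \<Rightarrow> real" where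
  "l1norm f = (\<Sum>\<^sub>\<infinity>t. norm (f t))"

definition conv :: "(cu \<Rightarrow> complex) \<Rightarrow> (cu \<Rightarrow> complex) \<Rightarrow> (cu \<Rightarrow> complex)" (infixl "#" 70) where
  "(f # g) t = (\<Sum>\<^sub>\<infinity>p\<in>{(s, u). cu_mult s u = Some t}. f (fst p) * g (snd p))"

definition delta :: "cu \<Rightarrow> cu \<Rightarrow> complex" where
  "delta s = (\<lambda>t. if t = s then 1 else 0)"

definition f0 :: "cu \<Rightarrow> complex" where
  "f0 = (\<lambda>t. delta cu_e t - delta ([G1], [G1]) t - delta ([G2], [G2]) t)"

definition closed_ideal :: "(cu \<Rightarrow> complex) set \<Rightarrow> bool" where
  "closed_ideal I \<longleftrightarrow>
     I \<subseteq> {f. in_A f} \<and>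
     (\<lambda>_. 0) \<in> I \<and>
     (\<forall>f\<in>I. \<forall>g\<in>I. (\<lambda>t. f t + g t) \<in> I) \<and>
     (\<forall>c. \<forall>f\<in>I. (\<lambda>t. c * f t) \<in> I) \<and>
     (\<forall>a. \<forall>f\<in>I. in_A a \<longrightarrow> a # f \<in> I \<and> f # a \<in> I) \<and>
     (\<forall>g. in_A g \<longrightarrow> (\<forall>\<epsilon>>0. \<exists>h\<in>I. l1norm (\<lambda>t. g t - h t) < \<epsilon>) \<longrightarrow> g \<in> I)"

definition J :: "(cu \<Rightarrow> complex) set" where
  "J = \<Inter> {I. closed_ideal I \<and> f0 \<in> I}"

definition sym_exp :: "cu \<Rightarrow> cu set" where
  "sym_exp v = {(fst v @ k, snd v @ k) | k. True}"

text \<open>Prefix n_l = (n_1,...,n_l) of an infinite word n.\<close>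
definition pref :: "(nat \<Rightarrow> gen) \<Rightarrow> nat \<Rightarrow> gen list" where
  "pref n l = map n [0..<l]"

definition zero_sums_at :: "(cu \<Rightarrow> complex) \<Rightarrow> cu \<Rightarrow> bool" where
  "zero_sums_at f v \<longleftrightarrow>
     (\<forall>n :: nat \<Rightarrow> gen. (\<lambda>l. f (fst v @ pref n l, snd v @ pref n l)) sums 0)"

end

theory Submission
  imports Defs
begin

text \<open>Write F k = f(s_{ik} s_{jk}^*) for finite words k, and P k for the sum of F over the prefixes of k.
  Multiplying f0 by delta(s_{ik}) on the left and by delta(s_{jk}^*) on the right shows that the elements
  g_k = delta(s_{ik}s_{jk}^*) - delta(s_{ik1}s_{jk1}^*) - delta(s_{ik2}s_{jk2}^*) lie in J. By telescoping,
  h - \<Sum>_{|k| \<le> N} P k g_k is supported on the words of length > N, where it equals P k on length N + 1 and F k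
  beyond. Since F sums to zero along every infinite branch, P k is minus the sum of F along any branch
  through k, so |P k| is bounded by the l^1 mass of F on the proper extensions of k. Hence the distance from
  h to J is at most twice the l^1 mass of F on words of length > N, which tends to zero.\<close>

instance gen :: finite
proof
  have "(UNIV :: gen set) = {G1, G2}" using gen.exhaust by auto
  then show "finite (UNIV :: gen set)" by (metis finite.emptyI finite_insert)
qed

lemma infsum_single_support:
  assumes "\<And>x. x \<in> A \<Longrightarrow> x \<noteq> p \<Longrightarrow> g x = 0"
  shows "infsum g A = (if p \<in> A then g p else 0)"
proof -
  have "infsum g A = infsum g (A \<inter> {p})"
    by (rule infsum_cong_neutral) (use assms in auto)
  then show ?thesis by (simp split: if_splits)
qed

lemma take_length_eq_iff: "take (length a) x = a \<longleftrightarrow> a @ drop (length a) x = x"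
  by (metis append_eq_conv_conj append_take_drop_id)

lemma cu_mult_Nil_left: "cu_mult (a, []) (k, l) = Some (a @ k, l)"
  by (simp add: cu_mult_def)

lemma cu_mult_Nil_right: "cu_mult (i, j) ([], b) = Some (i, b @ j)"
  by (auto simp add: cu_mult_def)

lemma conv_delta_left:
  "conv (delta (a, [])) u (x, y) = (if take (length a) x = a then u (drop (length a) x, y) else 0)"
proof -
  have "conv (delta (a, [])) u (x, y) =
      (\<Sum>\<^sub>\<infinity>q\<in>{(s, w). cu_mult s w = Some (x, y)}. delta (a, []) (fst q) * u (snd q))"
    by (simp add: conv_def)
  also have "\<dots> = (if take (length a) x = a then u (drop (length a) x, y) else 0)"
    by (subst infsum_single_support[where p = "((a, []), (drop (length a) x, y))"])
      (auto simp: delta_def cu_mult_Nil_left take_length_eq_iff)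
  finally show ?thesis .
qed

lemma conv_delta_right:
  "conv u (delta ([], b)) (x, y) = (if take (length b) y = b then u (x, drop (length b) y) else 0)"
proof -
  have "conv u (delta ([], b)) (x, y) =
      (\<Sum>\<^sub>\<infinity>q\<in>{(s, w). cu_mult s w = Some (x, y)}. u (fst q) * delta ([], b) (snd q))"
    by (simp add: conv_def)
  also have "\<dots> = (if take (length b) y = b then u (x, drop (length b) y) else 0)"
    by (subst infsum_single_support[where p = "((x, drop (length b) y), ([], b))"])
      (auto simp: delta_def cu_mult_Nil_right take_length_eq_iff)
  finally show ?thesis .
qed

lemma conv_delta_f0_delta:
  "conv (conv (delta (a, [])) f0) (delta ([], b)) =
     (\<lambda>t. delta (a, b) t - delta (a @ [G1], b @ [G1]) t - delta (a @ [G2], b @ [G2]) t)"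
proof
  fix t :: cu
  obtain x y where t: "t = (x, y)" by (cases t)
  show "conv (conv (delta (a, [])) f0) (delta ([], b)) t =
      delta (a, b) t - delta (a @ [G1], b @ [G1]) t - delta (a @ [G2], b @ [G2]) t"
    unfolding t conv_delta_right conv_delta_left
    by (auto simp: f0_def delta_def cu_e_def take_length_eq_iff)
qed

lemma in_A_delta: "in_A (delta s)"
proof -
  have "(\<lambda>t. norm (delta s t)) summable_on {s}" by simp
  then show ?thesis
    unfolding in_A_def by (rule summable_on_cong_neutral[THEN iffD1, rotated -1]) (auto simp: delta_def)
qed

lemma closed_ideal_closure:
  assumes "closed_ideal I" "in_A g" "\<And>e. 0 < e \<Longrightarrow> \<exists>h\<in>I. l1norm (\<lambda>t. g t - h t) < e"
  shows "g \<in> I"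
  using assms unfolding closed_ideal_def by blast

lemma closed_ideal_sum:
  assumes "closed_ideal I" "finite K" "\<And>k. k \<in> K \<Longrightarrow> g k \<in> I"
  shows "(\<lambda>t. \<Sum>k\<in>K. c k * g k t) \<in> I"
  using assms(2,3)
proof (induction K rule: finite_induct)
  case empty
  then show ?case using assms(1) by (simp add: closed_ideal_def)
next
  case (insert k K)
  then have "(\<lambda>t. c k * g k t) \<in> I" "(\<lambda>t. \<Sum>k\<in>K. c k * g k t) \<in> I"
    using assms(1) by (auto simp: closed_ideal_def)
  then show ?case using insert.hyps assms(1) by (simp add: closed_ideal_def)
qed

definition prefix_sum :: "('a list \<Rightarrow> 'b::comm_monoid_add) \<Rightarrow> 'a list \<Rightarrow> 'b" where
  "prefix_sum F m = (\<Sum>l\<le>length m. F (take l m))"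

definition proper_extensions :: "'a list \<Rightarrow> 'a list set" where
  "proper_extensions m = {m @ w | w. w \<noteq> []}"

definition tail_sum :: "('a list \<Rightarrow> real) \<Rightarrow> nat \<Rightarrow> real" where
  "tail_sum a M = (\<Sum>\<^sub>\<infinity>w\<in>{w. M < length w}. a w)"

definition zero_branch_sums :: "(gen list \<Rightarrow> complex) \<Rightarrow> bool" where
  "zero_branch_sums F \<longleftrightarrow> (\<forall>n. (\<lambda>l. F (pref n l)) sums 0)"

lemma prefix_sum_Nil [simp]: "prefix_sum F [] = F []"
  by (simp add: prefix_sum_def)

lemma prefix_sum_snoc: "prefix_sum F (m @ [x]) = prefix_sum F m + F (m @ [x])"
  by (simp add: prefix_sum_def)

lemma norm_prefix_sum_le:
  fixes F :: "gen list \<Rightarrow> complex"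
  assumes summable: "(\<lambda>w. norm (F w)) summable_on UNIV" and "zero_branch_sums F"
  shows "norm (prefix_sum F m) \<le> (\<Sum>\<^sub>\<infinity>w\<in>proper_extensions m. norm (F w))"
proof -
  define n where "n l = (if l < length m then m ! l else G1)" for l
  have inj: "inj (pref n)"
    by (rule injI) (metis length_map length_upt minus_nat.diff_0 pref_def)
  have pref_le: "pref n l = take l m" if "l \<le> length m" for l
    using that by (simp add: pref_def n_def list_eq_iff_nth_eq)
  have pref_gt: "pref n l \<in> proper_extensions m" if "length m < l" for l
  proof -
    have "pref n l = pref n (length m) @ map n [length m..<l]"
      using that upt_add_eq_append[of 0 "length m" "l - length m"] by (simp add: pref_def)
    then show ?thesis
      using that pref_le[of "length m"] by (auto simp: proper_extensions_def)
  qed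
  define c where "c l = F (pref n l)" for l
  have "(\<lambda>l. norm (c l)) summable_on UNIV"
  proof -
    have "(\<lambda>w. norm (F w)) summable_on range (pref n)"
      using summable by (rule summable_on_subset_banach) simp
    then show ?thesis using summable_on_reindex[OF inj, of "\<lambda>w. norm (F w)"] by (simp add: c_def comp_def)
  qed
  then have norm_c: "(\<lambda>l. norm (c l)) summable_on A" for A
    by (rule summable_on_subset_banach) simp
  then have c: "c summable_on A" for A
    using summable_on_iff_abs_summable_on_complex by blast
  have "c sums infsum c UNIV"
    using c by (intro has_sum_imp_sums has_sum_infsum)
  moreover have "c sums 0" using assms(2) unfolding zero_branch_sums_def c_def[abs_def] by blast
  ultimately have "infsum c UNIV = 0" using sums_unique2 by blast
  moreover have "infsum c UNIV = infsum c {..length m} + infsum c {length m<..}"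
  proof -
    have "(UNIV :: nat set) = {..length m} \<union> {length m<..}"
      and "{..length m} \<inter> {length m<..} = {}" by auto
    then show ?thesis using infsum_Un_disjoint[OF c c, of "{..length m}" "{length m<..}"] by simp
  qed
  moreover have "infsum c {..length m} = prefix_sum F m"
    by (simp add: prefix_sum_def c_def pref_le)
  ultimately have "prefix_sum F m = - infsum c {length m<..}"
    by (simp add: eq_neg_iff_add_eq_0)
  then have "norm (prefix_sum F m) \<le> (\<Sum>\<^sub>\<infinity>l\<in>{length m<..}. norm (c l))"
    using norm_infsum_bound[OF norm_c] by simp
  also have "\<dots> = (\<Sum>\<^sub>\<infinity>w\<in>pref n ` {length m<..}. norm (F w))"
    using infsum_reindex[OF inj_on_subset[OF inj subset_UNIV], of "\<lambda>w. norm (F w)"]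
    by (simp add: c_def comp_def)
  also have "\<dots> \<le> (\<Sum>\<^sub>\<infinity>w\<in>proper_extensions m. norm (F w))"
    by (rule infsum_mono2) (auto intro: summable_on_subset_banach[OF summable] pref_gt)
  finally show ?thesis .
qed

lemma finite_words_length_le: "finite {w :: 'a::finite list. length w \<le> M}"
  using finite_lists_length_le[of "UNIV :: 'a set"] by simp

lemma tail_sum_tendsto_zero:
  fixes a :: "'a::finite list \<Rightarrow> real"
  assumes summable: "a summable_on UNIV" and nonneg: "\<And>w. 0 \<le> a w"
  shows "tail_sum a \<longlonglongrightarrow> 0"
proof (rule LIMSEQ_I)
  fix r :: real assume "0 < r"
  then obtain X where X: "finite X" "dist (sum a X) (infsum a UNIV) \<le> r / 2"
    using infsum_finite_approximation[OF summable, of "r / 2"] by auto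
  have "norm (tail_sum a M - 0) < r" if M: "(\<Sum>x\<in>X. length x) \<le> M" for M
  proof -
    define Y where "Y = {w :: 'a list. length w \<le> M}"
    have "length x \<le> M" if "x \<in> X" for x
      using member_le_sum[OF that _ X(1), of length] M by linarith
    then have Y: "finite Y" "X \<subseteq> Y"
      using finite_words_length_le by (auto simp: Y_def)
    have "UNIV - Y = {w. M < length w}" by (auto simp: Y_def)
    then have "tail_sum a M = infsum a (UNIV - Y)" by (simp add: tail_sum_def)
    also have "\<dots> = infsum a UNIV - sum a Y"
      using infsum_Diff[OF summable] Y(1) by simp
    finally have "tail_sum a M = infsum a UNIV - sum a Y" .
    moreover have "sum a X \<le> sum a Y" using Y by (intro sum_mono2) (auto intro: nonneg)
    moreover have "0 \<le> tail_sum a M"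
      unfolding tail_sum_def by (rule infsum_nonneg) (rule nonneg)
    ultimately show ?thesis using X(2) \<open>0 < r\<close> by (simp add: dist_real_def)
  qed
  then show "\<exists>M0. \<forall>M\<ge>M0. norm (tail_sum a M - 0) < r" by blast
qed

lemma sum_proper_extensions_le_tail_sum:
  fixes a :: "'a::finite list \<Rightarrow> real"
  assumes summable: "a summable_on UNIV" and nonneg: "\<And>w. 0 \<le> a w"
  shows "(\<Sum>m | length m = M. \<Sum>\<^sub>\<infinity>w\<in>proper_extensions m. a w) \<le> tail_sum a M"
proof -
  have "(\<Sum>m | length m = M. \<Sum>\<^sub>\<infinity>w\<in>proper_extensions m. a w)
      = (\<Sum>\<^sub>\<infinity>w\<in>(\<Union>m\<in>{m. length m = M}. proper_extensions m). a w)"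
  proof (rule sum_infsum)
    show "finite {m :: 'a list. length m = M}"
      by (rule finite_subset[OF _ finite_words_length_le[of M]]) auto
    show "a summable_on proper_extensions m" for m
      using summable by (rule summable_on_subset_banach) simp
    show "proper_extensions m \<inter> proper_extensions m' = {}"
      if "m \<in> {m. length m = M}" "m' \<in> {m. length m = M}" "m \<noteq> m'" for m m'
      using that by (auto simp: proper_extensions_def append_eq_append_conv)
  qed
  also have "\<dots> \<le> tail_sum a M"
    unfolding tail_sum_def
    by (rule infsum_mono2) (auto simp: proper_extensions_def intro: nonneg summable_on_subset_banach[OF summable])
  finally show ?thesis .
qed

definition truncation_error :: "('a list \<Rightarrow> 'b::comm_monoid_add) \<Rightarrow> nat \<Rightarrow> 'a list \<Rightarrow> 'b" where
  "truncation_error F N m =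
     (if length m \<le> N then 0 else if length m = Suc N then prefix_sum F m else F m)"

lemma infsum_norm_truncation_error_le:
  fixes F :: "gen list \<Rightarrow> complex"
  assumes summable: "(\<lambda>w. norm (F w)) summable_on UNIV" and zero: "zero_branch_sums F"
  shows "(\<Sum>\<^sub>\<infinity>m. norm (truncation_error F N m)) \<le> 2 * tail_sum (\<lambda>w. norm (F w)) (Suc N)"
proof -
  define E where "E m = (\<Sum>\<^sub>\<infinity>w\<in>proper_extensions m. norm (F w))" for m
  define B1 where "B1 m = (if length m = Suc N then E m else 0)" for m
  define B2 where "B2 m = (if Suc N < length m then norm (F m) else 0)" for m
  have E_nonneg: "0 \<le> E m" for m
    unfolding E_def by (rule infsum_nonneg) simp
  have level_finite: "finite {m :: gen list. length m = Suc N}"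
    by (rule finite_subset[OF _ finite_words_length_le[of "Suc N"]]) auto
  have B1: "B1 summable_on UNIV" "infsum B1 UNIV \<le> tail_sum (\<lambda>w. norm (F w)) (Suc N)"
  proof -
    have "infsum B1 UNIV = infsum B1 {m. length m = Suc N}"
      by (rule infsum_cong_neutral) (auto simp: B1_def)
    moreover have "B1 summable_on UNIV \<longleftrightarrow> B1 summable_on {m. length m = Suc N}"
      by (rule summable_on_cong_neutral) (auto simp: B1_def)
    ultimately show "B1 summable_on UNIV" "infsum B1 UNIV \<le> tail_sum (\<lambda>w. norm (F w)) (Suc N)"
      using level_finite sum_proper_extensions_le_tail_sum[OF summable, of "Suc N"]
      by (simp_all add: B1_def E_def)
  qed
  have B2: "B2 summable_on UNIV" "infsum B2 UNIV = tail_sum (\<lambda>w. norm (F w)) (Suc N)"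
  proof -
    have "infsum B2 UNIV = infsum B2 {w. Suc N < length w}"
      by (rule infsum_cong_neutral) (auto simp: B2_def)
    moreover have "B2 summable_on UNIV \<longleftrightarrow> B2 summable_on {w. Suc N < length w}"
      by (rule summable_on_cong_neutral) (auto simp: B2_def)
    moreover have "B2 summable_on {w. Suc N < length w}"
      using summable_on_subset_banach[OF summable, of "{w. Suc N < length w}"]
      by (subst summable_on_cong[where g = "\<lambda>w. norm (F w)"]) (auto simp: B2_def)
    moreover have "infsum B2 {w. Suc N < length w} = tail_sum (\<lambda>w. norm (F w)) (Suc N)"
      unfolding tail_sum_def by (rule infsum_cong) (simp add: B2_def)
    ultimately show "B2 summable_on UNIV" "infsum B2 UNIV = tail_sum (\<lambda>w. norm (F w)) (Suc N)"
      by simp_all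
  qed
  have bound: "norm (truncation_error F N m) \<le> B1 m + B2 m" for m
    using norm_prefix_sum_le[OF summable zero, of m] E_nonneg[of m]
    by (auto simp: truncation_error_def B1_def B2_def E_def)
  have B: "(\<lambda>m. B1 m + B2 m) summable_on UNIV"
    using B1(1) B2(1) by (rule summable_on_add)
  have "(\<lambda>m. norm (truncation_error F N m)) summable_on UNIV"
    using B bound by (rule summable_on_comparison_test) simp
  then have "(\<Sum>\<^sub>\<infinity>m. norm (truncation_error F N m)) \<le> (\<Sum>\<^sub>\<infinity>m. B1 m + B2 m)"
    using B bound by (rule infsum_mono)
  also have "\<dots> = infsum B1 UNIV + infsum B2 UNIV"
    using B1(1) B2(1) by (rule infsum_add)
  finally show ?thesis using B1(2) B2(2) by simp
qed

definition sym_word :: "gen list \<Rightarrow> gen list \<Rightarrow> gen list \<Rightarrow> cu" where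
  "sym_word i j k = (i @ k, j @ k)"

definition branch_difference :: "gen list \<Rightarrow> gen list \<Rightarrow> gen list \<Rightarrow> cu \<Rightarrow> complex" where
  "branch_difference i j k t =
     delta (sym_word i j k) t - delta (sym_word i j (k @ [G1])) t - delta (sym_word i j (k @ [G2])) t"

definition approximant :: "(gen list \<Rightarrow> complex) \<Rightarrow> gen list \<Rightarrow> gen list \<Rightarrow> nat \<Rightarrow> cu \<Rightarrow> complex" where
  "approximant F i j N t = (\<Sum>k | length k \<le> N. prefix_sum F k * branch_difference i j k t)"

lemma inj_sym_word: "inj (sym_word i j)"
  by (rule injI) (simp add: sym_word_def)

lemma range_sym_word: "range (sym_word i j) = sym_exp (i, j)"
  by (auto simp: sym_exp_def sym_word_def)

lemma branch_difference_mem_closed_ideal: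
  assumes "closed_ideal I" "f0 \<in> I"
  shows "branch_difference i j k \<in> I"
proof -
  have "conv (conv (delta (i @ k, [])) f0) (delta ([], j @ k)) \<in> I"
    using assms in_A_delta by (simp add: closed_ideal_def)
  then show ?thesis
    by (simp add: conv_delta_f0_delta branch_difference_def[abs_def] sym_word_def)
qed

lemma approximant_mem_closed_ideal:
  assumes "closed_ideal I" "f0 \<in> I"
  shows "approximant F i j N \<in> I"
  unfolding approximant_def[abs_def]
  by (intro closed_ideal_sum[OF assms(1) finite_words_length_le] branch_difference_mem_closed_ideal[OF assms])

lemma approximant_outside_sym_exp:
  assumes "t \<notin> sym_exp (i, j)"
  shows "approximant F i j N t = 0"
proof -
  have "t \<noteq> sym_word i j k" for k
    using assms by (auto simp: range_sym_word[symmetric])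
  then show ?thesis by (simp add: approximant_def branch_difference_def delta_def)
qed

lemma approximant_sym_word:
  "approximant F i j N (sym_word i j m) = F m - truncation_error F N m"
proof -
  have delta_sym_word: "delta (sym_word i j k) (sym_word i j m) = (if k = m then 1 else 0)" for k
    by (simp add: delta_def sym_word_def)
  have "approximant F i j N (sym_word i j m) =
      (\<Sum>k | length k \<le> N. if k = m then prefix_sum F k else 0)
      - (\<Sum>k | length k \<le> N. if m = k @ [G1] then prefix_sum F k else 0)
      - (\<Sum>k | length k \<le> N. if m = k @ [G2] then prefix_sum F k else 0)"
    unfolding approximant_def branch_difference_def sum_subtractf[symmetric]
    by (rule sum.cong) (auto simp: delta_sym_word)
  also have "\<dots> = F m - truncation_error F N m"
  proof (cases m rule: rev_exhaust)
    case Nil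
    then show ?thesis by (simp add: truncation_error_def finite_words_length_le)
  next
    case (snoc m' x)
    have "(\<Sum>k | length k \<le> N. if m = k @ [y] then prefix_sum F k else 0) =
        (if length m' \<le> N \<and> x = y then prefix_sum F m' else 0)" for y
    proof -
      have "(\<Sum>k | length k \<le> N. if m = k @ [y] then prefix_sum F k else 0) =
          (\<Sum>k | length k \<le> N. if k = m' then (if x = y then prefix_sum F k else 0) else 0)"
        by (rule sum.cong) (auto simp: snoc)
      then show ?thesis by (simp only: sum.delta[OF finite_words_length_le]) auto
    qed
    then show ?thesis
      using gen.exhaust[of x] by (auto simp: snoc truncation_error_def prefix_sum_snoc finite_words_length_le)
  qed
  finally show ?thesis .
qed

lemma l1norm_restriction_minus_approximant:
  "l1norm (\<lambda>t. (if t \<in> sym_exp (i, j) then f t else 0) - approximant (\<lambda>k. f (sym_word i j k)) i j N t)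
     = (\<Sum>\<^sub>\<infinity>m. norm (truncation_error (\<lambda>k. f (sym_word i j k)) N m))"
proof -
  let ?g = "\<lambda>t. norm ((if t \<in> sym_exp (i, j) then f t else 0) - approximant (\<lambda>k. f (sym_word i j k)) i j N t)"
  have "l1norm (\<lambda>t. (if t \<in> sym_exp (i, j) then f t else 0) - approximant (\<lambda>k. f (sym_word i j k)) i j N t)
      = infsum ?g (range (sym_word i j))"
    unfolding l1norm_def range_sym_word
    by (rule infsum_cong_neutral) (auto simp: approximant_outside_sym_exp)
  also have "\<dots> = (\<Sum>\<^sub>\<infinity>m. ?g (sym_word i j m))"
    using infsum_reindex[OF inj_sym_word] by (simp add: comp_def)
  finally show ?thesis
    by (simp add: approximant_sym_word range_sym_word[symmetric])
qed

lemma abs_summable_on_sym_word: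
  assumes "in_A f"
  shows "(\<lambda>k. norm (f (sym_word i j k))) summable_on UNIV"
proof -
  have "(\<lambda>t. norm (f t)) summable_on range (sym_word i j)"
    using assms unfolding in_A_def by (rule summable_on_subset_banach) simp
  then show ?thesis
    using summable_on_reindex[OF inj_sym_word, of "\<lambda>t. norm (f t)"] by (simp add: comp_def)
qed

theorem proposition3p11:
  fixes f :: "cu \<Rightarrow> complex" and i j :: "gen list"
  assumes "in_A f"
    and "zero_sums_at f (i, j)"
  shows "(\<lambda>t. if t \<in> sym_exp (i, j) then f t else 0) \<in> J"
proof -
  define F where "F k = f (sym_word i j k)" for k
  define h where "h t = (if t \<in> sym_exp (i, j) then f t else 0)" for t
  have summable: "(\<lambda>w. norm (F w)) summable_on UNIV"
    unfolding F_def using assms(1) by (rule abs_summable_on_sym_word)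
  have zero: "zero_branch_sums F"
    using assms(2) by (simp add: zero_sums_at_def zero_branch_sums_def F_def sym_word_def)
  have h: "in_A h"
    using assms(1) unfolding in_A_def h_def
    by (rule summable_on_comparison_test) auto
  have error: "l1norm (\<lambda>t. h t - approximant F i j N t) \<le> 2 * tail_sum (\<lambda>w. norm (F w)) (Suc N)" for N
    using l1norm_restriction_minus_approximant infsum_norm_truncation_error_le[OF summable zero]
    by (simp add: h_def F_def[abs_def])
  have "h \<in> I" if I: "closed_ideal I" "f0 \<in> I" for I
  proof (rule closed_ideal_closure[OF I(1) h])
    fix e :: real assume "0 < e"
    then obtain N where "norm (tail_sum (\<lambda>w. norm (F w)) (Suc N) - 0) < e / 2"
      using LIMSEQ_D[OF tail_sum_tendsto_zero[OF summable], of "e / 2"] by (auto intro: le_SucI)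
    then have "l1norm (\<lambda>t. h t - approximant F i j N t) < e"
      using error[of N] by simp
    then show "\<exists>g\<in>I. l1norm (\<lambda>t. h t - g t) < e"
      using approximant_mem_closed_ideal[OF I] by blast
  qed
  then show ?thesis by (simp add: J_def h_def[abs_def])
qed

end
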